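(* Let $u$ be a $\rho,\lambda$-Catalan word and $v$ a $\lambda,\mu$-Catalan word. Then for every configuration of the two-stacks-in-series machine from which $uv$ can be applied, $vu$ can also be applied, and applying $uv$ and applying $vu$ yield the same configuration (same remaining input, same contents of both stacks, same output). In particular, if $u$ and $v$ are nonempty, then $uv$ is a forbidden word.
   Context: Two stacks in series: a machine with an input stream, a first stack, a second stack and an output stream, with three moves: $\rho$ moves the next element of the input onto the top of the first stack; $\lambda$ moves the top element of the first stack onto the top of the second stack; $\mu$ moves the top element of the second stack to the end of the output. A word over $\{\rho,\lambda,\mu\}$ acts on configurations by performing the moves left to right (a move can only be applied if the relevant source is nonempty). For letters $x,y$, an $x,y$-Catalan word is a word over $\{x,y\}$ with equally many $x$'s and $y$'s such that every prefix contains at least as many $x$'s as $y$'s. Order the letters by $\rho<\lambda<\mu$ and compare words lexicographically; a word $w$ over $\{\rho,\lambda,\mu\}$ is forbidden if there is another word $w'$ with $w'>w$ that has the same effect on the machine as $w$. *)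

theory Defs
  imports Main
begin

datatype move = Rho | Lam | Mu

fun move_rank :: "move \<Rightarrow> nat" where
  "move_rank Rho = 0" | "move_rank Lam = 1" | "move_rank Mu = 2"

definition move_less :: "move \<Rightarrow> move \<Rightarrow> bool" where
  "move_less x y \<longleftrightarrow> move_rank x < move_rank y"

definition word_less :: "move list \<Rightarrow> move list \<Rightarrow> bool" where
  "word_less w w' \<longleftrightarrow> lexordp move_less w w'"

text \<open>Configuration: (input, first stack, second stack, output).
  The next input element is the head of the input list; the top of each stack is
  the head of its list; the output is read left to right (new elements appended at the end).\<close>
type_synonym 'a config = "'a list \<times> 'a list \<times> 'a list \<times> 'a list"

fun step :: "move \<Rightarrow> 'a config \<Rightarrow> 'a config option" where
  "step Rho (i, s1, s2, out) =
     (case i of [] \<Rightarrow> None | x # i' \<Rightarrow> Some (i', x # s1, s2, out))"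
| "step Lam (i, s1, s2, out) =
     (case s1 of [] \<Rightarrow> None | x # s1' \<Rightarrow> Some (i, s1', x # s2, out))"
| "step Mu (i, s1, s2, out) =
     (case s2 of [] \<Rightarrow> None | x # s2' \<Rightarrow> Some (i, s1, s2', out @ [x]))"

fun run :: "move list \<Rightarrow> 'a config \<Rightarrow> 'a config option" where
  "run [] c = Some c"
| "run (m # w) c = (case step m c of None \<Rightarrow> None | Some c' \<Rightarrow> run w c')"

definition count_letter :: "move \<Rightarrow> move list \<Rightarrow> nat" where
  "count_letter x w = length (filter (\<lambda>m. m = x) w)"

definition catalan :: "move \<Rightarrow> move \<Rightarrow> move list \<Rightarrow> bool" where
  "catalan x y w \<longleftrightarrow> set w \<subseteq> {x, y} \<and> count_letter x w = count_letter y w \<and>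
     (\<forall>k \<le> length w. count_letter y (take k w) \<le> count_letter x (take k w))"

definition same_effect :: "'a itself \<Rightarrow> move list \<Rightarrow> move list \<Rightarrow> bool" where
  "same_effect _ w w' \<longleftrightarrow> (\<forall>c :: 'a config. run w c = run w' c)"

definition forbidden :: "'a itself \<Rightarrow> move list \<Rightarrow> bool" where
  "forbidden T w \<longleftrightarrow> (\<exists>w'. word_less w w' \<and> same_effect T w w')"

end

theory Submission
  imports Defs
begin

text \<open>A \<open>\<rho>,\<lambda>\<close>-Catalan word with \<open>n\<close> letters \<open>\<rho>\<close> moves the first \<open>n\<close> input
  elements onto the second stack and leaves everything else alone; a \<open>\<lambda>,\<mu>\<close>-Catalan word
  with \<open>m\<close> letters \<open>\<lambda>\<close> moves the top \<open>m\<close> elements of the first stack to the end of the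
  output and leaves everything else alone.  The ballot condition is exactly what prevents
  either word from reaching below the part of the machine it owns.  The two words therefore
  act on disjoint parts of the configuration and commute; and if one of them is not
  applicable, counting letters shows that neither \<open>uv\<close> nor \<open>vu\<close> is.  Since \<open>u\<close> starts
  with \<open>\<rho>\<close> and \<open>v\<close> with \<open>\<lambda>\<close>, the word \<open>vu\<close> is lexicographically larger than \<open>uv\<close>.\<close>

lemma run_append:
  "run (w @ w') c = (case run w c of None \<Rightarrow> None | Some c' \<Rightarrow> run w' c')"
  by (induction w arbitrary: c) (auto split: option.splits)

lemma count_letter_append [simp]:
  "count_letter x (w @ w') = count_letter x w + count_letter x w'"
  by (simp add: count_letter_def)

lemma step_frame:
  assumes "step m (i, s1, s2, out) = Some (i', s1', s2', out')"
  shows "step m (i @ a, s1 @ b, s2 @ c, p @ out) = Some (i' @ a, s1' @ b, s2' @ c, p @ out')"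
  using assms by (cases m) (auto split: list.splits)

lemma run_frame:
  assumes "run w (i, s1, s2, out) = Some (i', s1', s2', out')"
  shows "run w (i @ a, s1 @ b, s2 @ c, p @ out) = Some (i' @ a, s1' @ b, s2' @ c, p @ out')"
  using assms
proof (induction w arbitrary: i s1 s2 out)
  case (Cons m w)
  then obtain j t1 t2 r where
    first: "step m (i, s1, s2, out) = Some (j, t1, t2, r)" and
    rest: "run w (j, t1, t2, r) = Some (i', s1', s2', out')"
    by (auto split: option.splits)
  show ?case using step_frame[OF first] Cons.IH[OF rest] by simp
qed simp

lemma run_defined_counts:
  assumes "run w (i, s1, s2, out) \<noteq> None"
  shows "count_letter Rho w \<le> length i \<and> count_letter Lam w \<le> length s1 + count_letter Rho w"
  using assms
proof (induction w arbitrary: i s1 s2 out)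
  case (Cons m w)
  then show ?case
    by (cases m; cases i; cases s1; cases s2; fastforce simp: count_letter_def)
qed (simp add: count_letter_def)

lemma catalan_count_other:
  "catalan x y w \<Longrightarrow> z \<noteq> x \<Longrightarrow> z \<noteq> y \<Longrightarrow> count_letter z w = 0"
  unfolding catalan_def count_letter_def by (auto simp: filter_empty_conv)

lemma catalan_hd:
  assumes "catalan x y w" and "w \<noteq> []"
  shows "hd w = x"
proof -
  obtain a w' where w: "w = a # w'" using assms(2) by (cases w) auto
  have "count_letter y (take 1 w) \<le> count_letter x (take 1 w)" and "a \<in> {x, y}"
    using assms(1) w unfolding catalan_def by auto
  then show ?thesis using w by (auto simp: count_letter_def split: if_splits)
qed

text \<open>The ballot condition is relative to the height of the first stack, so that the
  induction can pass to the suffix after one move.\<close>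

lemma run_Rho_Lam_word:
  assumes "set w \<subseteq> {Rho, Lam}"
    and "\<forall>k \<le> length w. count_letter Lam (take k w) \<le> count_letter Rho (take k w) + length s1"
    and "length i = count_letter Rho w"
  shows "\<exists>s1' s2'. run w (i, s1, s2, out) = Some ([], s1', s2', out) \<and>
           length s1' + count_letter Lam w = length s1 + count_letter Rho w"
  using assms
proof (induction w arbitrary: i s1 s2)
  case (Cons m w)
  have ballot: "count_letter Lam (take (Suc k) (m # w)) \<le> count_letter Rho (take (Suc k) (m # w)) + length s1"
    if "k \<le> length w" for k
    using Cons.prems(2) that by (metis Suc_le_mono length_Cons)
  show ?case
  proof (cases m)
    case Rho
    then obtain x i' where i: "i = x # i'"
      using Cons.prems(3) by (cases i) (auto simp: count_letter_def)
    have "\<exists>s1' s2'. run w (i', x # s1, s2, out) = Some ([], s1', s2', out) \<and>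
            length s1' + count_letter Lam w = length (x # s1) + count_letter Rho w"
      using Cons.prems Rho i ballot by (intro Cons.IH) (auto simp: count_letter_def)
    then show ?thesis using Rho i by (auto simp: count_letter_def)
  next
    case Lam
    then obtain x s1t where s1: "s1 = x # s1t"
      using ballot[of 0] by (cases s1) (auto simp: count_letter_def)
    have "\<exists>s1' s2'. run w (i, s1t, x # s2, out) = Some ([], s1', s2', out) \<and>
            length s1' + count_letter Lam w = length s1t + count_letter Rho w"
      using Cons.prems Lam s1 ballot by (intro Cons.IH) (auto simp: count_letter_def)
    then show ?thesis using Lam s1 by (auto simp: count_letter_def)
  next
    case Mu
    then show ?thesis using Cons.prems by auto
  qed
qed (simp add: count_letter_def)

lemma run_Lam_Mu_word:
  assumes "set w \<subseteq> {Lam, Mu}"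
    and "\<forall>k \<le> length w. count_letter Mu (take k w) \<le> count_letter Lam (take k w) + length s2"
    and "length s1 = count_letter Lam w"
  shows "\<exists>s2' q. run w (i, s1, s2, out) = Some (i, [], s2', out @ q) \<and>
           length s2' + count_letter Mu w = length s2 + count_letter Lam w"
  using assms
proof (induction w arbitrary: s1 s2 out)
  case (Cons m w)
  have ballot: "count_letter Mu (take (Suc k) (m # w)) \<le> count_letter Lam (take (Suc k) (m # w)) + length s2"
    if "k \<le> length w" for k
    using Cons.prems(2) that by (metis Suc_le_mono length_Cons)
  show ?case
  proof (cases m)
    case Lam
    then obtain x s1t where s1: "s1 = x # s1t"
      using Cons.prems(3) by (cases s1) (auto simp: count_letter_def)
    have "\<exists>s2' q. run w (i, s1t, x # s2, out) = Some (i, [], s2', out @ q) \<and>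
            length s2' + count_letter Mu w = length (x # s2) + count_letter Lam w"
      using Cons.prems Lam s1 ballot by (intro Cons.IH) (auto simp: count_letter_def)
    then show ?thesis using Lam s1 by (auto simp: count_letter_def)
  next
    case Mu
    then obtain x s2t where s2: "s2 = x # s2t"
      using ballot[of 0] by (cases s2) (auto simp: count_letter_def)
    have "\<exists>s2' q. run w (i, s1, s2t, out @ [x]) = Some (i, [], s2', (out @ [x]) @ q) \<and>
            length s2' + count_letter Mu w = length s2t + count_letter Lam w"
      using Cons.prems Mu s2 ballot by (intro Cons.IH) (auto simp: count_letter_def)
    then show ?thesis using Mu s2 by (auto simp: count_letter_def)
  next
    case Rho
    then show ?thesis using Cons.prems by auto
  qed
qed (simp add: count_letter_def)

lemma run_catalan_Rho_Lam:
  fixes i :: "'a list"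
  assumes "catalan Rho Lam u" and "count_letter Rho u \<le> length i"
  obtains t where
    "\<And>s1 s2 out. run u (i, s1, s2, out) = Some (drop (count_letter Rho u) i, s1, t @ s2, out)"
proof -
  let ?n = "count_letter Rho u"
  have "\<exists>s1' s2'. run u (take ?n i, [], [], []) = Some ([], s1', s2', []) \<and>
          length s1' + count_letter Lam u = length ([] :: 'a list) + ?n"
    using assms unfolding catalan_def by (intro run_Rho_Lam_word) auto
  then obtain t where "run u (take ?n i, [], [], []) = Some ([], [], t, [])"
    using assms(1) unfolding catalan_def by auto
  from run_frame[OF this, of "drop ?n i"] show thesis by (intro that) simp
qed

lemma run_catalan_Lam_Mu:
  fixes s1 :: "'a list"
  assumes "catalan Lam Mu v" and "count_letter Lam v \<le> length s1"
  obtains q where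
    "\<And>i s2 out. run v (i, s1, s2, out) = Some (i, drop (count_letter Lam v) s1, s2, out @ q)"
proof -
  let ?m = "count_letter Lam v"
  have "\<exists>s2' q. run v ([], take ?m s1, [], []) = Some ([], [], s2', [] @ q) \<and>
          length s2' + count_letter Mu v = length ([] :: 'a list) + ?m"
    using assms unfolding catalan_def by (intro run_Lam_Mu_word) auto
  then obtain q where "run v ([], take ?m s1, [], []) = Some ([], [], [], q)"
    using assms(1) unfolding catalan_def by auto
  from run_frame[OF this, of _ "drop ?m s1"] show thesis by (intro that) simp
qed

lemma catalan_Rho_Lam_Lam_Mu_commute:
  fixes c :: "'a config"
  assumes u: "catalan Rho Lam u" and v: "catalan Lam Mu v"
  shows "run (v @ u) c = run (u @ v) c"
proof -
  obtain i s1 s2 out where c: "c = (i, s1, s2, out)" by (cases c) auto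
  have counts: "count_letter Lam u = count_letter Rho u" "count_letter Rho v = 0"
    using u catalan_count_other[OF v] unfolding catalan_def by simp_all
  show ?thesis
  proof (cases "count_letter Rho u \<le> length i \<and> count_letter Lam v \<le> length s1")
    case True
    obtain t where U: "\<And>s1 s2 out. run u (i, s1, s2, out) =
        Some (drop (count_letter Rho u) i, s1, t @ s2, out)"
      using run_catalan_Rho_Lam[OF u] True by blast
    obtain q where V: "\<And>i s2 out. run v (i, s1, s2, out) =
        Some (i, drop (count_letter Lam v) s1, s2, out @ q)"
      using run_catalan_Lam_Mu[OF v] True by blast
    show ?thesis using c by (simp add: run_append U V)
  next
    case False
    have "run w c = None" if "w = u @ v \<or> w = v @ u" for w
    proof (rule ccontr)
      assume "run w c \<noteq> None"
      from run_defined_counts[OF this[unfolded c]] show False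
        using False that counts by auto
    qed
    then show ?thesis by simp
  qed
qed

theorem mainTheorem3:
  fixes u v :: "move list" and c :: "'a config"
  assumes "catalan Rho Lam u" and "catalan Lam Mu v"
  shows "(run (u @ v) c \<noteq> None \<longrightarrow> run (v @ u) c = run (u @ v) c)
         \<and> (u \<noteq> [] \<and> v \<noteq> [] \<longrightarrow> forbidden TYPE('a) (u @ v))"
proof (intro conjI impI)
  show "run (v @ u) c = run (u @ v) c"
    using catalan_Rho_Lam_Lam_Mu_commute[OF assms] .
next
  assume "u \<noteq> [] \<and> v \<noteq> []"
  then obtain u' v' where "u = Rho # u'" and "v = Lam # v'"
    using catalan_hd[OF assms(1)] catalan_hd[OF assms(2)] by (metis list.collapse)
  then have "word_less (u @ v) (v @ u)"
    by (simp add: word_less_def lexordp_def move_less_def)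
  moreover have "same_effect TYPE('a) (u @ v) (v @ u)"
    using catalan_Rho_Lam_Lam_Mu_commute[OF assms] unfolding same_effect_def by metis
  ultimately show "forbidden TYPE('a) (u @ v)"
    unfolding forbidden_def by blast
qed

end
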